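(* Let $\Theta\subset(0,1)\times(0,\infty)$ be compact and convex, let $\theta_0\in\mathrm{Interior}(\Theta)$, and let $Z_1,Z_2,\dots$ be i.i.d. random variables with distribution $\mathrm{GPD}(\theta_0)$. For $k\in\mathbb N$ define $\hat S_k(x)=\frac1k\sum_{j=1}^k\mathbf 1(Z_j>x)$ and \[ J_k(\theta)=\int_0^\infty\big(\hat S_k(x)-S_\theta(x)\big)^2\,\mathrm dx,\qquad \theta\in\Theta . \] Let $\hat\theta_k=\hat\theta_k(Z_1,\dots,Z_k)$ be any sequence of $\Theta$-valued estimators with $J_k(\hat\theta_k)\le J_k(\theta_0)+o_{\mathbb P}(1)$ as $k\to\infty$. Then $\hat\theta_k\to\theta_0$ in probability as $k\to\infty$, and for every $x\ge0$, $S_{\hat\theta_k}(x)\to S_{\theta_0}(x)$ in probability.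
   Context: For $\theta=(\gamma,\sigma)$ with $\gamma\in(0,1)$, $\sigma>0$, $S_\theta(x)=\left(1+\gamma\frac{x}{\sigma}\right)^{-1/\gamma}$, $x\ge0$, is the survival function of the generalized Pareto distribution $\mathrm{GPD}(\theta)$, whose distribution function is $F_\theta=1-S_\theta$. *)

theory Defs
  imports "HOL-Probability.Probability"
begin

text \<open>Survival function of GPD(theta), theta = (gamma, sigma).\<close>
definition GPD_surv :: "real \<times> real \<Rightarrow> real \<Rightarrow> real" where
  "GPD_surv \<theta> x = (1 + fst \<theta> * x / snd \<theta>) powr (- 1 / fst \<theta>)"

definition GPD_cdf :: "real \<times> real \<Rightarrow> real \<Rightarrow> real" where
  "GPD_cdf \<theta> x = (if x < 0 then 0 else 1 - GPD_surv \<theta> x)"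

definition emp_surv :: "(nat \<Rightarrow> 'a \<Rightarrow> real) \<Rightarrow> nat \<Rightarrow> 'a \<Rightarrow> real \<Rightarrow> real" where
  "emp_surv Z k \<omega> x = (\<Sum>j = 1..k. if Z j \<omega> > x then 1 else 0) / real k"

definition J_crit :: "(nat \<Rightarrow> 'a \<Rightarrow> real) \<Rightarrow> nat \<Rightarrow> 'a \<Rightarrow> real \<times> real \<Rightarrow> real" where
  "J_crit Z k \<omega> \<theta> = (LBINT x:{0..}. (emp_surv Z k \<omega> x - GPD_surv \<theta> x)\<^sup>2)"

definition conv_in_prob :: "'a measure \<Rightarrow> (nat \<Rightarrow> 'a \<Rightarrow> 'b::metric_space) \<Rightarrow> 'b \<Rightarrow> bool" where
  "conv_in_prob M X c \<longleftrightarrow>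
     (\<forall>\<epsilon>>0. (\<lambda>k. measure M {\<omega> \<in> space M. dist (X k \<omega>) c > \<epsilon>}) \<longlonglongrightarrow> 0)"

end

theory Submission
  imports Defs
begin

(* Since (a - b)^2 <= 2 (c - a)^2 + 2 (c - b)^2, the squared L2 distance between the survival
   functions of theta_hat_k and theta0 is at most 2 J_k(theta_hat_k) + 2 J_k(theta0), hence at most
   4 J_k(theta0) + o_P(1).  By Tonelli and the binomial variance, E J_k(theta0) is the integral of
   S(1 - S)/k <= sigma0 / ((1 - gamma0) k), so J_k(theta0) -> 0 in probability by Markov's
   inequality.  Identifiability of the GPD family, Fatou's lemma and compactness of Theta bound the
   L2 distance away from 0 outside every ball around theta0, so theta_hat_k -> theta0 in probability;
   continuity of theta |-> S_theta(x) gives the second claim. *)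

section \<open>Auxiliary facts on integrals and convergence in probability\<close>

lemma borel_measurable_dist_const:
  fixes X :: "'a \<Rightarrow> 'b::metric_space"
  assumes "X \<in> borel_measurable M"
  shows "(\<lambda>\<omega>. dist (X \<omega>) c) \<in> borel_measurable M"
proof -
  have "(\<lambda>y. dist y c) \<in> borel_measurable borel"
    by (intro borel_measurable_continuous_onI continuous_intros)
  then show ?thesis
    by (rule measurable_compose[OF assms])
qed

lemma set_integral_nonneg_eq_nn_integral:
  fixes f :: "'a \<Rightarrow> real"
  assumes "set_integrable M A f" "\<And>x. x \<in> A \<Longrightarrow> 0 \<le> f x"
  shows "ennreal (LINT x:A|M. f x) = (\<integral>\<^sup>+x\<in>A. f x \<partial>M)"
  unfolding set_lebesgue_integral_def nn_integral_set_ennreal using assms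
  by (subst nn_integral_eq_integral) (auto simp: mult_ac set_integrable_def indicator_def)

lemma set_integrable_square_diff:
  fixes f g :: "'a \<Rightarrow> real"
  assumes f: "set_integrable M A f" and g: "set_integrable M A g"
    and f01: "\<And>x. x \<in> A \<Longrightarrow> f x \<in> {0..1}" and g01: "\<And>x. x \<in> A \<Longrightarrow> g x \<in> {0..1}"
  shows "set_integrable M A (\<lambda>x. (f x - g x)\<^sup>2)"
  unfolding set_integrable_def
proof (rule Bochner_Integration.integrable_bound)
  show "integrable M (\<lambda>x. indicator A x * f x + indicator A x * g x)"
    using f g unfolding set_integrable_def by auto
  have "(\<lambda>x. indicator A x *\<^sub>R (f x - g x)\<^sup>2) = (\<lambda>x. (indicator A x * f x - indicator A x * g x)\<^sup>2)"
    by (auto simp: indicator_def fun_eq_iff)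
  then show "(\<lambda>x. indicator A x *\<^sub>R (f x - g x)\<^sup>2) \<in> borel_measurable M"
    using f g unfolding set_integrable_def by (simp add: borel_measurable_integrable)
  have unit: "\<bar>(a - b)\<^sup>2\<bar> \<le> \<bar>a + b\<bar>" if "a \<in> {0..1}" "b \<in> {0..1}" for a b :: real
  proof -
    have "\<bar>a - b\<bar> \<le> 1"
      using that by auto
    then have "\<bar>a - b\<bar> * \<bar>a - b\<bar> \<le> \<bar>a - b\<bar>"
      using mult_left_le[of "\<bar>a - b\<bar>" "\<bar>a - b\<bar>"] by simp
    moreover have "\<bar>a - b\<bar> \<le> a + b"
      using that by auto
    ultimately show ?thesis
      using that by (simp add: power2_eq_square)
  qed
  show "AE x in M. norm (indicator A x *\<^sub>R (f x - g x)\<^sup>2) \<le> norm (indicator A x * f x + indicator A x * g x)"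
  proof (rule AE_I2)
    fix x
    show "norm (indicator A x *\<^sub>R (f x - g x)\<^sup>2) \<le> norm (indicator A x * f x + indicator A x * g x)"
      using unit[OF f01 g01, of x] by (cases "x \<in> A") simp_all
  qed
qed

lemma set_integral_square_diff_le:
  fixes f g h :: "'a \<Rightarrow> real"
  assumes "set_integrable M A (\<lambda>x. (f x - g x)\<^sup>2)" "set_integrable M A (\<lambda>x. (f x - h x)\<^sup>2)"
    and "set_integrable M A (\<lambda>x. (g x - h x)\<^sup>2)"
  shows "(LINT x:A|M. (g x - h x)\<^sup>2) \<le> 2 * (LINT x:A|M. (f x - g x)\<^sup>2) + 2 * (LINT x:A|M. (f x - h x)\<^sup>2)"
proof -
  have "(g x - h x)\<^sup>2 \<le> 2 * (f x - g x)\<^sup>2 + 2 * (f x - h x)\<^sup>2" for x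
    using zero_le_power2[of "2 * f x - g x - h x"] by (simp add: power2_eq_square algebra_simps)
  then have "(LINT x:A|M. (g x - h x)\<^sup>2) \<le> (LINT x:A|M. 2 * (f x - g x)\<^sup>2 + 2 * (f x - h x)\<^sup>2)"
    using assms by (intro set_integral_mono) auto
  also have "\<dots> = 2 * (LINT x:A|M. (f x - g x)\<^sup>2) + 2 * (LINT x:A|M. (f x - h x)\<^sup>2)"
    using assms by (simp add: set_integral_add set_integral_mult_right)
  finally show ?thesis .
qed

lemma (in prob_space) expectation_count_sq_deviation:
  fixes p :: real
  assumes I: "finite I" and A: "\<And>i. i \<in> I \<Longrightarrow> A i \<in> events"
    and p: "\<And>i. i \<in> I \<Longrightarrow> prob (A i) = p"
    and pairwise: "\<And>i j. i \<in> I \<Longrightarrow> j \<in> I \<Longrightarrow> i \<noteq> j \<Longrightarrow> prob (A i \<inter> A j) = p\<^sup>2"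
  shows "expectation (\<lambda>\<omega>. ((\<Sum>i\<in>I. indicator (A i) \<omega>) - card I * p)\<^sup>2) = card I * p * (1 - p)"
proof -
  define n where "n = real (card I)"
  have int: "integrable M (indicator B :: 'a \<Rightarrow> real)" if "B \<in> events" for B
    using that by (intro integrable_real_indicator) (auto simp: less_top[symmetric])
  have "(\<Sum>i\<in>I. indicator (A i) \<omega>)\<^sup>2 = (\<Sum>i\<in>I. \<Sum>j\<in>I. indicator (A i \<inter> A j) \<omega> :: real)" for \<omega>
    by (simp add: power2_eq_square sum_product indicator_inter_arith)
  then have sq: "((\<Sum>i\<in>I. indicator (A i) \<omega>) - n * p)\<^sup>2
      = (\<Sum>i\<in>I. \<Sum>j\<in>I. indicator (A i \<inter> A j) \<omega>) - 2 * n * p * (\<Sum>i\<in>I. indicator (A i) \<omega>) + (n * p)\<^sup>2"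
    for \<omega>
    by (simp add: power2_diff algebra_simps)
  have E1: "expectation (\<lambda>\<omega>. \<Sum>i\<in>I. indicator (A i) \<omega> :: real) = n * p"
    using A p by (simp add: Bochner_Integration.integral_sum int n_def sets.Int_space_eq2)
  have "(\<Sum>j\<in>I. prob (A i \<inter> A j)) = p + (n - 1) * p\<^sup>2" if i: "i \<in> I" for i
  proof -
    have card: "card (I - {i}) = card I - 1" "1 \<le> card I"
      using I i by (auto simp: Suc_le_eq card_gt_0_iff)
    have "(\<Sum>j\<in>I. prob (A i \<inter> A j)) = prob (A i) + (\<Sum>j\<in>I - {i}. prob (A i \<inter> A j))"
      using I i by (simp add: sum.remove)
    also have "(\<Sum>j\<in>I - {i}. prob (A i \<inter> A j)) = (\<Sum>j\<in>I - {i}. p\<^sup>2)"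
      using i pairwise by (intro sum.cong) auto
    also have "\<dots> = (n - 1) * p\<^sup>2"
      using card by (simp add: n_def of_nat_diff)
    finally show ?thesis
      using i p by simp
  qed
  then have E2: "expectation (\<lambda>\<omega>. \<Sum>i\<in>I. \<Sum>j\<in>I. indicator (A i \<inter> A j) \<omega> :: real) = n * (p + (n - 1) * p\<^sup>2)"
    using A by (simp add: Bochner_Integration.integral_sum int n_def sets.Int_space_eq2 Int_absorb2)
  have "expectation (\<lambda>\<omega>. ((\<Sum>i\<in>I. indicator (A i) \<omega>) - n * p)\<^sup>2)
      = n * (p + (n - 1) * p\<^sup>2) - 2 * n * p * (n * p) + (n * p)\<^sup>2"
    unfolding sq using A E1 E2 by (simp add: int prob_space)
  then show ?thesis
    by (simp add: n_def power2_eq_square algebra_simps)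
qed

lemma conv_in_prob_dominated:
  fixes X :: "nat \<Rightarrow> 'a \<Rightarrow> 'b::metric_space" and Y :: "nat \<Rightarrow> 'a \<Rightarrow> real"
  assumes M: "prob_space M" and Y: "\<And>k. Y k \<in> borel_measurable M" "conv_in_prob M Y 0"
    and dom: "\<And>\<epsilon>. 0 < \<epsilon> \<Longrightarrow> \<exists>\<eta>>0. \<forall>k. \<forall>\<omega>\<in>space M. \<epsilon> < dist (X k \<omega>) c \<longrightarrow> \<eta> \<le> Y k \<omega>"
  shows "conv_in_prob M X c"
  unfolding conv_in_prob_def
proof (intro allI impI)
  interpret prob_space M by (rule M)
  fix \<epsilon> :: real assume "0 < \<epsilon>"
  then obtain \<eta> where \<eta>: "0 < \<eta>" and \<eta>_le: "\<And>k \<omega>. \<omega> \<in> space M \<Longrightarrow> \<epsilon> < dist (X k \<omega>) c \<Longrightarrow> \<eta> \<le> Y k \<omega>"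
    using dom by meson
  have le: "measure M {\<omega> \<in> space M. \<epsilon> < dist (X k \<omega>) c} \<le> measure M {\<omega> \<in> space M. \<eta> / 2 < dist (Y k \<omega>) 0}" for k
  proof (rule finite_measure_mono)
    show "{\<omega> \<in> space M. \<epsilon> < dist (X k \<omega>) c} \<subseteq> {\<omega> \<in> space M. \<eta> / 2 < dist (Y k \<omega>) 0}"
      using \<eta> \<eta>_le[of _ k] by (fastforce simp: dist_real_def)
    show "{\<omega> \<in> space M. \<eta> / 2 < dist (Y k \<omega>) 0} \<in> events"
      using Y(1)[of k] by measurable
  qed
  have lim: "(\<lambda>k. measure M {\<omega> \<in> space M. \<eta> / 2 < dist (Y k \<omega>) 0}) \<longlonglongrightarrow> 0"
    using Y(2) half_gt_zero[OF \<eta>] unfolding conv_in_prob_def by blast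
  show "(\<lambda>k. measure M {\<omega> \<in> space M. \<epsilon> < dist (X k \<omega>) c}) \<longlonglongrightarrow> 0"
    using le by (intro Lim_null_comparison[OF always_eventually lim]) simp
qed

lemma conv_in_prob_continuous_map:
  fixes X :: "nat \<Rightarrow> 'a \<Rightarrow> 'b::metric_space" and f :: "'b \<Rightarrow> 'c::metric_space"
  assumes M: "prob_space M" and X: "\<And>k. X k \<in> borel_measurable M" "conv_in_prob M X c"
    and f: "isCont f c"
  shows "conv_in_prob M (\<lambda>k \<omega>. f (X k \<omega>)) (f c)"
proof (rule conv_in_prob_dominated[OF M])
  show "(\<lambda>\<omega>. dist (X k \<omega>) c) \<in> borel_measurable M" for k
    using X(1) by (rule borel_measurable_dist_const)
  show "conv_in_prob M (\<lambda>k \<omega>. dist (X k \<omega>) c) 0"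
    using X(2) by (simp add: conv_in_prob_def)
  fix \<epsilon> :: real assume "0 < \<epsilon>"
  then obtain \<delta> where "0 < \<delta>" "\<And>y. dist y c < \<delta> \<Longrightarrow> dist (f y) (f c) < \<epsilon>"
    using f unfolding continuous_at_eps_delta by blast
  then show "\<exists>\<eta>>0. \<forall>k. \<forall>\<omega>\<in>space M. \<epsilon> < dist (f (X k \<omega>)) (f c) \<longrightarrow> \<eta> \<le> dist (X k \<omega>) c"
    by (meson less_asym not_le)
qed

lemma conv_in_prob_zero_add:
  fixes X Y :: "nat \<Rightarrow> 'a \<Rightarrow> real"
  assumes M: "prob_space M" and meas: "\<And>k. X k \<in> borel_measurable M" "\<And>k. Y k \<in> borel_measurable M"
    and X: "conv_in_prob M X 0" and Y: "conv_in_prob M Y 0"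
  shows "conv_in_prob M (\<lambda>k \<omega>. X k \<omega> + Y k \<omega>) 0"
  unfolding conv_in_prob_def
proof (intro allI impI)
  interpret prob_space M by (rule M)
  fix \<epsilon> :: real assume \<epsilon>: "0 < \<epsilon>"
  define A where "A U k = {\<omega> \<in> space M. \<epsilon> / 2 < dist (U k \<omega>) 0}" for U :: "nat \<Rightarrow> 'a \<Rightarrow> real" and k
  have A_ev: "A X k \<in> events" "A Y k \<in> events" for k
    unfolding A_def using meas[of k] by measurable
  have le: "measure M {\<omega> \<in> space M. \<epsilon> < dist (X k \<omega> + Y k \<omega>) 0} \<le> measure M (A X k) + measure M (A Y k)" for k
  proof -
    have "measure M {\<omega> \<in> space M. \<epsilon> < dist (X k \<omega> + Y k \<omega>) 0} \<le> measure M (A X k \<union> A Y k)"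
      using A_ev by (intro finite_measure_mono) (auto simp: A_def dist_real_def)
    also have "\<dots> \<le> measure M (A X k) + measure M (A Y k)"
      using A_ev by (rule measure_Un_le)
    finally show ?thesis .
  qed
  have "(\<lambda>k. measure M (A X k) + measure M (A Y k)) \<longlonglongrightarrow> 0 + 0"
    using X Y half_gt_zero[OF \<epsilon>] unfolding conv_in_prob_def A_def by (intro tendsto_add) blast+
  then have lim: "(\<lambda>k. measure M (A X k) + measure M (A Y k)) \<longlonglongrightarrow> 0"
    by simp
  show "(\<lambda>k. measure M {\<omega> \<in> space M. \<epsilon> < dist (X k \<omega> + Y k \<omega>) 0}) \<longlonglongrightarrow> 0"
    using le by (intro Lim_null_comparison[OF always_eventually lim]) simp
qed

lemma conv_in_prob_zero_cmult:
  fixes X :: "nat \<Rightarrow> 'a \<Rightarrow> real"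
  assumes "conv_in_prob M X 0"
  shows "conv_in_prob M (\<lambda>k \<omega>. c * X k \<omega>) 0"
proof (cases "c = 0")
  case False
  have "{\<omega> \<in> space M. \<epsilon> < dist (c * X k \<omega>) 0} = {\<omega> \<in> space M. \<epsilon> / \<bar>c\<bar> < dist (X k \<omega>) 0}" for \<epsilon> k
    using False by (auto simp: dist_real_def abs_mult field_simps)
  then show ?thesis
    using assms False unfolding conv_in_prob_def by simp
qed (simp add: conv_in_prob_def)

lemma conv_in_prob_zero_if_nn_integral_le:
  fixes X :: "nat \<Rightarrow> 'a \<Rightarrow> real"
  assumes M: "prob_space M" and X: "\<And>k. X k \<in> borel_measurable M"
    and bound: "\<forall>\<^sub>F k in sequentially. (\<integral>\<^sup>+\<omega>. ennreal \<bar>X k \<omega>\<bar> \<partial>M) \<le> ennreal (b k)" and b: "b \<longlonglongrightarrow> 0"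
  shows "conv_in_prob M X 0"
  unfolding conv_in_prob_def
proof (intro allI impI)
  interpret prob_space M by (rule M)
  fix \<epsilon> :: real assume \<epsilon>: "0 < \<epsilon>"
  have Markov: "norm (measure M {\<omega> \<in> space M. \<epsilon> < dist (X k \<omega>) 0}) \<le> \<bar>b k\<bar> / \<epsilon>"
    if bk: "(\<integral>\<^sup>+\<omega>. ennreal \<bar>X k \<omega>\<bar> \<partial>M) \<le> ennreal (b k)" for k
  proof -
    define S where "S = {\<omega> \<in> space M. \<epsilon> < dist (X k \<omega>) 0}"
    have S: "S \<in> events"
      unfolding S_def using X[of k] by measurable
    have "ennreal (\<epsilon> * measure M S) = (\<integral>\<^sup>+\<omega>. ennreal \<epsilon> * indicator S \<omega> \<partial>M)"
      using S \<epsilon> by (simp add: nn_integral_cmult_indicator emeasure_eq_measure ennreal_mult)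
    also have "\<dots> \<le> (\<integral>\<^sup>+\<omega>. ennreal \<bar>X k \<omega>\<bar> \<partial>M)"
      by (intro nn_integral_mono) (auto simp: S_def indicator_def dist_real_def)
    also have "\<dots> \<le> ennreal \<bar>b k\<bar>"
      using bk by (rule order.trans) (simp add: ennreal_leI)
    finally have "\<epsilon> * measure M S \<le> \<bar>b k\<bar>"
      by (simp add: ennreal_le_iff)
    then show ?thesis
      using \<epsilon> unfolding S_def by (simp add: field_simps)
  qed
  have "\<forall>\<^sub>F k in sequentially. norm (measure M {\<omega> \<in> space M. \<epsilon> < dist (X k \<omega>) 0}) \<le> \<bar>b k\<bar> / \<epsilon>"
    using bound by eventually_elim (rule Markov)
  moreover have "(\<lambda>k. \<bar>b k\<bar> / \<epsilon>) \<longlonglongrightarrow> 0"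
    using tendsto_divide[OF tendsto_rabs[OF b] tendsto_const[of \<epsilon>]] \<epsilon> by simp
  ultimately show "(\<lambda>k. measure M {\<omega> \<in> space M. \<epsilon> < dist (X k \<omega>) 0}) \<longlonglongrightarrow> 0"
    by (rule Lim_null_comparison)
qed

section \<open>The generalized Pareto survival function\<close>

lemma GPD_surv_base_pos:
  fixes \<theta> :: "real \<times> real" and x :: real
  assumes "0 < fst \<theta>" "0 < snd \<theta>" "0 \<le> x"
  shows "0 < 1 + fst \<theta> * x / snd \<theta>"
  using assms by (simp add: add_pos_nonneg)

lemma GPD_surv_pos:
  assumes "0 < fst \<theta>" "0 < snd \<theta>" "0 \<le> x"
  shows "0 < GPD_surv \<theta> x"
  using GPD_surv_base_pos[OF assms] by (simp add: GPD_surv_def)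

lemma GPD_surv_le_1:
  assumes "0 < fst \<theta>" "0 < snd \<theta>" "0 \<le> x"
  shows "GPD_surv \<theta> x \<le> 1"
proof -
  have "1 \<le> 1 + fst \<theta> * x / snd \<theta>"
    using assms by simp
  then have "(1 + fst \<theta> * x / snd \<theta>) powr (- 1 / fst \<theta>) \<le> (1 + fst \<theta> * x / snd \<theta>) powr 0"
    using assms by (intro powr_mono) auto
  then show ?thesis
    using GPD_surv_base_pos[OF assms] by (simp add: GPD_surv_def)
qed

lemma borel_measurable_GPD_surv [measurable]: "GPD_surv \<theta> \<in> borel_measurable borel"
  unfolding GPD_surv_def by measurable

lemma isCont_GPD_surv_param:
  assumes "0 < fst \<theta>" "0 < snd \<theta>" "0 \<le> x"
  shows "isCont (\<lambda>\<theta>. GPD_surv \<theta> x) \<theta>"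
  using GPD_surv_base_pos[OF assms] assms unfolding isCont_def GPD_surv_def
  by (intro tendsto_intros) auto

lemma continuous_on_GPD_surv:
  assumes "0 < fst \<theta>" "0 < snd \<theta>"
  shows "continuous_on {0..} (GPD_surv \<theta>)"
  unfolding GPD_surv_def using assms
  by (intro continuous_intros) (fastforce dest: GPD_surv_base_pos[OF assms])+

lemma nn_integral_GPD_surv:
  assumes "\<theta> \<in> {0<..<1} \<times> {0<..}"
  shows "(\<integral>\<^sup>+x\<in>{0..}. GPD_surv \<theta> x \<partial>lborel) = snd \<theta> / (1 - fst \<theta>)"
proof -
  define \<gamma> \<sigma> where "\<gamma> = fst \<theta>" and "\<sigma> = snd \<theta>"
  have \<gamma>: "0 < \<gamma>" "\<gamma> < 1" and \<sigma>: "0 < \<sigma>"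
    using assms by (auto simp: \<gamma>_def \<sigma>_def mem_Times_iff)
  define F where "F x = - (\<sigma> / (1 - \<gamma>)) * (1 + \<gamma> * x / \<sigma>) powr (1 - 1 / \<gamma>)" for x
  have "(\<integral>\<^sup>+x. ennreal (GPD_surv \<theta> x) * indicator {0..} x \<partial>lborel) = 0 - F 0"
  proof (rule nn_integral_FTC_atLeast)
    fix x :: real
    assume x: "0 \<le> x"
    have base: "0 < 1 + \<gamma> * x / \<sigma>"
      using GPD_surv_base_pos[OF _ _ x] \<gamma> \<sigma> by (simp add: \<gamma>_def \<sigma>_def)
    have "(F has_real_derivative
        - (\<sigma> / (1 - \<gamma>)) * ((1 - 1 / \<gamma>) * (1 + \<gamma> * x / \<sigma>) powr (1 - 1 / \<gamma> - 1) * (\<gamma> / \<sigma>))) (at x)"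
      unfolding F_def using base \<gamma> \<sigma> by (auto intro!: derivative_eq_intros)
    also have "- (\<sigma> / (1 - \<gamma>)) * ((1 - 1 / \<gamma>) * (1 + \<gamma> * x / \<sigma>) powr (1 - 1 / \<gamma> - 1) * (\<gamma> / \<sigma>))
        = GPD_surv \<theta> x"
      using \<gamma> \<sigma> by (simp add: GPD_surv_def \<gamma>_def[symmetric] \<sigma>_def[symmetric] field_simps)
    finally show "(F has_real_derivative GPD_surv \<theta> x) (at x)" .
    show "0 \<le> GPD_surv \<theta> x"
      using GPD_surv_pos[OF _ _ x, of \<theta>] \<gamma> \<sigma> by (simp add: \<gamma>_def \<sigma>_def)
  next
    have "filterlim (\<lambda>x. 1 + \<gamma> * x / \<sigma>) at_top at_top"
      using \<gamma> \<sigma> by real_asymp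
    then have "((\<lambda>x. (1 + \<gamma> * x / \<sigma>) powr (1 - 1 / \<gamma>)) \<longlongrightarrow> 0) at_top"
      using \<gamma> by (intro tendsto_neg_powr) (auto simp: field_simps)
    then show "(F \<longlongrightarrow> 0) at_top"
      unfolding F_def using tendsto_mult_right_zero by blast
  qed simp
  then show ?thesis
    by (simp add: F_def \<gamma>_def \<sigma>_def mult.commute)
qed

lemma set_integrable_GPD_surv:
  assumes "\<theta> \<in> {0<..<1} \<times> {0<..}"
  shows "set_integrable lborel {0..} (GPD_surv \<theta>)"
  unfolding set_integrable_def
proof (rule integrableI_nonneg)
  have "(\<integral>\<^sup>+x. ennreal (indicator {0..} x *\<^sub>R GPD_surv \<theta> x) \<partial>lborel)
      = (\<integral>\<^sup>+x\<in>{0..}. GPD_surv \<theta> x \<partial>lborel)"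
    by (intro nn_integral_cong) (auto simp: indicator_def)
  then show "(\<integral>\<^sup>+x. ennreal (indicator {0..} x *\<^sub>R GPD_surv \<theta> x) \<partial>lborel) < \<infinity>"
    using nn_integral_GPD_surv[OF assms] by simp
  show "AE x in lborel. 0 \<le> indicator {0..} x *\<^sub>R GPD_surv \<theta> x"
    using assms GPD_surv_pos[of \<theta>] by (auto simp: indicator_def less_imp_le mem_Times_iff)
qed simp

lemma GPD_surv_inject:
  assumes a: "0 < fst a" "0 < snd a" and b: "0 < fst b" "0 < snd b"
    and eq: "\<And>x. 0 < x \<Longrightarrow> GPD_surv a x = GPD_surv b x"
  shows "a = b"
proof -
  define L where "L \<theta> x = - (1 / fst \<theta>) * ln (1 + fst \<theta> * x / snd \<theta>)" for \<theta> :: "real \<times> real" and x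
  have ln_GPD_surv: "ln (GPD_surv \<theta> x) = L \<theta> x" if "0 < fst \<theta>" "0 < snd \<theta>" "0 < x" for \<theta> x
    using GPD_surv_base_pos[OF that(1,2) less_imp_le[OF that(3)]]
    by (simp add: GPD_surv_def L_def)
  have L_deriv: "(L \<theta> has_real_derivative - 1 / (snd \<theta> + fst \<theta> * x)) (at x)"
    if \<theta>: "0 < fst \<theta>" "0 < snd \<theta>" and x: "0 < x" for \<theta> x
  proof -
    have base: "0 < 1 + fst \<theta> * x / snd \<theta>"
      using GPD_surv_base_pos[OF \<theta> less_imp_le[OF x]] .
    have "(L \<theta> has_real_derivative - (1 / fst \<theta>) * ((fst \<theta> / snd \<theta>) / (1 + fst \<theta> * x / snd \<theta>))) (at x)"
      unfolding L_def using base \<theta> by (auto intro!: derivative_eq_intros)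
    also have "- (1 / fst \<theta>) * ((fst \<theta> / snd \<theta>) / (1 + fst \<theta> * x / snd \<theta>)) = - 1 / (snd \<theta> + fst \<theta> * x)"
      using \<theta> base by (simp add: field_simps)
    finally show ?thesis .
  qed
  have hazard_eq: "snd a + fst a * x = snd b + fst b * x" if x: "0 < x" for x
  proof -
    have "(L b has_real_derivative - 1 / (snd a + fst a * x)) (at x)"
    proof (rule has_field_derivative_transform_within_open[OF L_deriv[OF a x], of "{0<..}"])
      show "L a y = L b y" if "y \<in> {0<..}" for y
        using ln_GPD_surv[OF a] ln_GPD_surv[OF b] eq that by force
    qed (use x in auto)
    then have "- 1 / (snd a + fst a * x) = - 1 / (snd b + fst b * x)"
      using L_deriv[OF b x] by (rule DERIV_unique)
    moreover have "0 < snd a + fst a * x" "0 < snd b + fst b * x"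
      using a b x by (auto simp: add_pos_pos)
    ultimately show ?thesis
      by (simp add: field_simps)
  qed
  show ?thesis
    using hazard_eq[of 1] hazard_eq[of 2] by (simp add: prod_eq_iff)
qed

section \<open>The empirical criterion at the true parameter\<close>

lemma emp_surv_nonneg: "0 \<le> emp_surv Z k \<omega> x"
  unfolding emp_surv_def by (intro divide_nonneg_nonneg sum_nonneg) auto

lemma emp_surv_le_1: "emp_surv Z k \<omega> x \<le> 1"
proof -
  have "(\<Sum>j = 1..k. if Z j \<omega> > x then 1 else 0) \<le> (\<Sum>j = 1..k. 1::real)"
    by (intro sum_mono) auto
  then show ?thesis
    unfolding emp_surv_def by (cases "k = 0") (auto simp: divide_simps)
qed

lemma emp_surv_eq_0:
  assumes "\<And>j. j \<in> {1..k} \<Longrightarrow> Z j \<omega> \<le> x"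
  shows "emp_surv Z k \<omega> x = 0"
  using assms unfolding emp_surv_def by (subst sum.neutral) (auto simp: not_less)

lemma borel_measurable_emp_surv [measurable]: "emp_surv Z k \<omega> \<in> borel_measurable borel"
  unfolding emp_surv_def by measurable

lemma set_integrable_emp_surv: "set_integrable lborel {0..} (emp_surv Z k \<omega>)"
proof -
  define B where "B = (\<Sum>j = 1..k. \<bar>Z j \<omega>\<bar>)"
  have "emp_surv Z k \<omega> x = 0" if "B < x" for x
  proof (rule emp_surv_eq_0)
    fix j assume "j \<in> {1..k}"
    then have "\<bar>Z j \<omega>\<bar> \<le> B"
      unfolding B_def by (intro member_le_sum) auto
    then have "Z j \<omega> \<le> B"
      by simp
    then show "Z j \<omega> \<le> x"
      using that by simp
  qed
  then have bound: "norm (indicator {0..} x *\<^sub>R emp_surv Z k \<omega> x) \<le> norm (indicator {0..B} x :: real)" for x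
    using emp_surv_nonneg[of Z k \<omega> x] emp_surv_le_1[of Z k \<omega> x]
    by (cases "B < x") (auto simp: indicator_def)
  have "integrable lborel (indicator {0..B} :: real \<Rightarrow> real)"
    by (intro integrable_real_indicator) (auto simp: emeasure_lborel_Icc_eq)
  then show ?thesis
    unfolding set_integrable_def by (rule Bochner_Integration.integrable_bound[OF _ _ AE_I2[OF bound]]) simp
qed

lemma set_integrable_emp_surv_GPD_surv:
  assumes "\<theta> \<in> {0<..<1} \<times> {0<..}"
  shows "set_integrable lborel {0..} (\<lambda>x. (emp_surv Z k \<omega> x - GPD_surv \<theta> x)\<^sup>2)"
  using assms set_integrable_emp_surv set_integrable_GPD_surv
  by (intro set_integrable_square_diff)
     (auto simp: emp_surv_nonneg emp_surv_le_1 GPD_surv_le_1 less_imp_le[OF GPD_surv_pos])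

lemma J_crit_nonneg: "0 \<le> J_crit Z k \<omega> \<theta>"
  unfolding J_crit_def set_lebesgue_integral_def by (intro integral_nonneg_AE) auto

lemma borel_measurable_emp_surv_pair:
  assumes Z: "\<And>j. j \<in> {1..k} \<Longrightarrow> Z j \<in> borel_measurable M"
  shows "(\<lambda>p. emp_surv Z k (fst p) (snd p)) \<in> borel_measurable (M \<Otimes>\<^sub>M lborel)"
  unfolding emp_surv_def
proof (intro borel_measurable_divide borel_measurable_sum)
  fix j assume "j \<in> {1..k}"
  note [measurable] = Z[OF this]
  show "(\<lambda>p. if snd p < Z j (fst p) then 1 else 0 :: real) \<in> borel_measurable (M \<Otimes>\<^sub>M lborel)"
    by measurable
qed simp

lemma borel_measurable_emp_surv_sample:
  assumes Z: "\<And>j. j \<in> {1..k} \<Longrightarrow> Z j \<in> borel_measurable M"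
  shows "(\<lambda>\<omega>. emp_surv Z k \<omega> x) \<in> borel_measurable M"
  unfolding emp_surv_def
proof (intro borel_measurable_divide borel_measurable_sum)
  fix j assume "j \<in> {1..k}"
  note [measurable] = Z[OF this]
  show "(\<lambda>\<omega>. if x < Z j \<omega> then 1 else 0 :: real) \<in> borel_measurable M"
    by measurable
qed simp

lemma borel_measurable_J_crit:
  assumes "\<And>j. j \<in> {1..k} \<Longrightarrow> Z j \<in> borel_measurable M"
  shows "(\<lambda>\<omega>. J_crit Z k \<omega> \<theta>) \<in> borel_measurable M"
proof -
  note [measurable] = borel_measurable_emp_surv_pair[OF assms]
  show ?thesis
    unfolding J_crit_def set_lebesgue_integral_def by measurable
qed

lemma (in prob_space) expectation_emp_surv_sq_deviation:
  assumes indep: "indep_vars (\<lambda>_. borel) Z {1..}"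
    and surv: "\<And>j. 1 \<le> j \<Longrightarrow> prob {\<omega> \<in> space M. x < Z j \<omega>} = s" and k: "1 \<le> k"
  shows "expectation (\<lambda>\<omega>. (emp_surv Z k \<omega> x - s)\<^sup>2) = s * (1 - s) / k"
proof -
  define A where "A j = {\<omega> \<in> space M. x < Z j \<omega>}" for j
  have Z: "random_variable borel (Z j)" if "1 \<le> j" for j
    using indep that unfolding indep_vars_def2 by auto
  have A_ev: "A j \<in> events" if "1 \<le> j" for j
    using Z[OF that] unfolding A_def by measurable
  have "prob (A i \<inter> A j) = s\<^sup>2" if "1 \<le> i" "1 \<le> j" "i \<noteq> j" for i j
  proof -
    have "A l \<in> {Z l -` B \<inter> space M | B. B \<in> sets borel}" for l
      unfolding A_def by (intro CollectI exI[of _ "{x<..}"]) auto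
    then have "prob (\<Inter>l\<in>{i, j}. A l) = (\<Prod>l\<in>{i, j}. prob (A l))"
      using indep that unfolding indep_vars_def2 by (intro indep_setsD) auto
    then show ?thesis
      using that surv by (simp add: A_def power2_eq_square)
  qed
  then have "expectation (\<lambda>\<omega>. ((\<Sum>j\<in>{1..k}. indicator (A j) \<omega>) - card {1..k} * s)\<^sup>2)
      = card {1..k} * s * (1 - s)"
    using A_ev surv by (intro expectation_count_sq_deviation) (auto simp: A_def)
  then have var: "expectation (\<lambda>\<omega>. ((\<Sum>j\<in>{1..k}. indicator (A j) \<omega>) - k * s)\<^sup>2) = k * s * (1 - s)"
    by simp
  have "(emp_surv Z k \<omega> x - s)\<^sup>2 = ((\<Sum>j\<in>{1..k}. indicator (A j) \<omega>) - k * s)\<^sup>2 / k\<^sup>2"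
    if "\<omega> \<in> space M" for \<omega>
    using that k by (simp add: emp_surv_def A_def indicator_def power_divide field_simps of_bool_def)
  then have "expectation (\<lambda>\<omega>. (emp_surv Z k \<omega> x - s)\<^sup>2)
      = expectation (\<lambda>\<omega>. ((\<Sum>j\<in>{1..k}. indicator (A j) \<omega>) - k * s)\<^sup>2) / k\<^sup>2"
    by (simp cong: Bochner_Integration.integral_cong)
  then show ?thesis
    using var k by (simp add: power2_eq_square)
qed

lemma (in prob_space) prob_greater_eq_GPD_surv:
  assumes X: "random_variable borel X"
    and cdf: "\<And>x. measure M {\<omega> \<in> space M. X \<omega> \<le> x} = GPD_cdf \<theta> x" and x: "0 \<le> x"
  shows "prob {\<omega> \<in> space M. x < X \<omega>} = GPD_surv \<theta> x"
proof -
  have "{\<omega> \<in> space M. x < X \<omega>} = space M - {\<omega> \<in> space M. X \<omega> \<le> x}"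
    by auto
  moreover have "{\<omega> \<in> space M. X \<omega> \<le> x} \<in> events"
    using X by measurable
  ultimately show ?thesis
    using cdf[of x] x by (simp add: prob_compl GPD_cdf_def)
qed

lemma (in prob_space) nn_integral_emp_surv_sq_deviation_le:
  assumes indep: "indep_vars (\<lambda>_. borel) Z {1..}"
    and cdf: "\<And>j x. 1 \<le> j \<Longrightarrow> measure M {\<omega> \<in> space M. Z j \<omega> \<le> x} = GPD_cdf \<theta>0 x"
    and \<theta>0: "0 < fst \<theta>0" "0 < snd \<theta>0" and k: "1 \<le> k" and x: "0 \<le> x"
  shows "(\<integral>\<^sup>+\<omega>. (emp_surv Z k \<omega> x - GPD_surv \<theta>0 x)\<^sup>2 \<partial>M) \<le> GPD_surv \<theta>0 x / k"
proof -
  have Z: "random_variable borel (Z j)" if "1 \<le> j" for j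
    using indep that unfolding indep_vars_def2 by auto
  have [measurable]: "(\<lambda>\<omega>. emp_surv Z k \<omega> x) \<in> borel_measurable M"
    using Z by (intro borel_measurable_emp_surv_sample) auto
  have S: "0 < GPD_surv \<theta>0 x" "GPD_surv \<theta>0 x \<le> 1"
    using GPD_surv_pos[OF \<theta>0 x] GPD_surv_le_1[OF \<theta>0 x] .
  have "integrable M (\<lambda>\<omega>. (emp_surv Z k \<omega> x - GPD_surv \<theta>0 x)\<^sup>2)"
  proof (rule integrable_const_bound[where B = 1])
    show "AE \<omega> in M. norm ((emp_surv Z k \<omega> x - GPD_surv \<theta>0 x)\<^sup>2) \<le> 1"
    proof (rule AE_I2)
      fix \<omega>
      have "\<bar>emp_surv Z k \<omega> x - GPD_surv \<theta>0 x\<bar> \<le> 1"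
        using S emp_surv_nonneg[of Z k \<omega> x] emp_surv_le_1[of Z k \<omega> x] by (auto simp: abs_le_iff)
      then show "norm ((emp_surv Z k \<omega> x - GPD_surv \<theta>0 x)\<^sup>2) \<le> 1"
        by (simp add: abs_square_le_1)
    qed
  qed measurable
  moreover have "expectation (\<lambda>\<omega>. (emp_surv Z k \<omega> x - GPD_surv \<theta>0 x)\<^sup>2)
      = GPD_surv \<theta>0 x * (1 - GPD_surv \<theta>0 x) / k"
    by (intro expectation_emp_surv_sq_deviation[OF indep _ k] prob_greater_eq_GPD_surv[OF Z cdf x])
  ultimately have "(\<integral>\<^sup>+\<omega>. (emp_surv Z k \<omega> x - GPD_surv \<theta>0 x)\<^sup>2 \<partial>M)
      = GPD_surv \<theta>0 x * (1 - GPD_surv \<theta>0 x) / k"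
    by (simp add: nn_integral_eq_integral)
  then show ?thesis
    using S by (auto intro!: ennreal_leI divide_right_mono simp: mult_left_le)
qed

lemma (in prob_space) nn_integral_J_crit_le:
  assumes indep: "indep_vars (\<lambda>_. borel) Z {1..}"
    and cdf: "\<And>j x. 1 \<le> j \<Longrightarrow> measure M {\<omega> \<in> space M. Z j \<omega> \<le> x} = GPD_cdf \<theta>0 x"
    and \<theta>0: "\<theta>0 \<in> {0<..<1} \<times> {0<..}" and k: "1 \<le> k"
  shows "(\<integral>\<^sup>+\<omega>. J_crit Z k \<omega> \<theta>0 \<partial>M) \<le> snd \<theta>0 / (1 - fst \<theta>0) / k"
proof -
  interpret pair_sigma_finite M lborel
    unfolding pair_sigma_finite_def
    using prob_space_imp_sigma_finite[OF prob_space_axioms] lborel.sigma_finite_measure_axioms by simp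
  have [measurable]: "(\<lambda>p. emp_surv Z k (fst p) (snd p)) \<in> borel_measurable (M \<Otimes>\<^sub>M lborel)"
    using indep by (intro borel_measurable_emp_surv_pair) (auto simp: indep_vars_def2)
  have "(\<integral>\<^sup>+\<omega>. J_crit Z k \<omega> \<theta>0 \<partial>M)
      = (\<integral>\<^sup>+\<omega>. (\<integral>\<^sup>+x. ennreal ((emp_surv Z k \<omega> x - GPD_surv \<theta>0 x)\<^sup>2) * indicator {0..} x \<partial>lborel) \<partial>M)"
    unfolding J_crit_def
    by (intro nn_integral_cong) (simp add: set_integral_nonneg_eq_nn_integral set_integrable_emp_surv_GPD_surv[OF \<theta>0])
  also have "\<dots> = (\<integral>\<^sup>+x. (\<integral>\<^sup>+\<omega>. ennreal ((emp_surv Z k \<omega> x - GPD_surv \<theta>0 x)\<^sup>2) * indicator {0..} x \<partial>M) \<partial>lborel)"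
    by (rule Fubini'[symmetric]) measurable
  also have "\<dots> \<le> (\<integral>\<^sup>+x. ennreal (1 / k * GPD_surv \<theta>0 x) * indicator {0..} x \<partial>lborel)"
    using \<theta>0 nn_integral_emp_surv_sq_deviation_le[OF indep cdf _ _ k]
    by (intro nn_integral_mono) (auto simp: nn_integral_multc indicator_def mem_Times_iff)
  also have "\<dots> = ennreal (1 / k) * (\<integral>\<^sup>+x\<in>{0..}. GPD_surv \<theta>0 x \<partial>lborel)"
    by (subst nn_integral_cmult[symmetric])
       (auto intro!: nn_integral_cong simp: ennreal_mult'[symmetric] mult.assoc[symmetric])
  also have "\<dots> = snd \<theta>0 / (1 - fst \<theta>0) / k"
    using \<theta>0 by (auto simp: nn_integral_GPD_surv ennreal_mult[symmetric] mem_Times_iff)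
  finally show ?thesis .
qed

lemma J_crit_conv_in_prob:
  assumes M: "prob_space M" and indep: "prob_space.indep_vars M (\<lambda>_. borel) Z {1..}"
    and cdf: "\<And>j x. 1 \<le> j \<Longrightarrow> measure M {\<omega> \<in> space M. Z j \<omega> \<le> x} = GPD_cdf \<theta>0 x"
    and \<theta>0: "\<theta>0 \<in> {0<..<1} \<times> {0<..}"
  shows "conv_in_prob M (\<lambda>k \<omega>. J_crit Z k \<omega> \<theta>0) 0"
proof (rule conv_in_prob_zero_if_nn_integral_le[OF M])
  interpret prob_space M by (rule M)
  show "(\<lambda>\<omega>. J_crit Z k \<omega> \<theta>0) \<in> borel_measurable M" for k
    using indep by (intro borel_measurable_J_crit) (auto simp: indep_vars_def2)
  show "\<forall>\<^sub>F k in sequentially. (\<integral>\<^sup>+\<omega>. \<bar>J_crit Z k \<omega> \<theta>0\<bar> \<partial>M) \<le> snd \<theta>0 / (1 - fst \<theta>0) / k"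
  proof (rule eventually_mono[OF eventually_ge_at_top[of 1]])
    fix k :: nat assume "1 \<le> k"
    then show "(\<integral>\<^sup>+\<omega>. \<bar>J_crit Z k \<omega> \<theta>0\<bar> \<partial>M) \<le> snd \<theta>0 / (1 - fst \<theta>0) / k"
      using nn_integral_J_crit_le[OF indep cdf \<theta>0, of k] by (simp add: J_crit_nonneg)
  qed
  show "(\<lambda>k. snd \<theta>0 / (1 - fst \<theta>0) / k) \<longlonglongrightarrow> 0"
    by (rule lim_const_over_n)
qed

section \<open>Identifiability in the squared L2 distance\<close>

definition GPD_sqdist :: "real \<times> real \<Rightarrow> real \<times> real \<Rightarrow> real" where
  "GPD_sqdist \<theta> \<theta>' = (LBINT x:{0..}. (GPD_surv \<theta> x - GPD_surv \<theta>' x)\<^sup>2)"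

lemma GPD_sqdist_nonneg: "0 \<le> GPD_sqdist \<theta> \<theta>'"
  unfolding GPD_sqdist_def set_lebesgue_integral_def by (intro integral_nonneg_AE) auto

lemma set_integrable_GPD_surv_diff:
  assumes "\<theta> \<in> {0<..<1} \<times> {0<..}" "\<theta>' \<in> {0<..<1} \<times> {0<..}"
  shows "set_integrable lborel {0..} (\<lambda>x. (GPD_surv \<theta> x - GPD_surv \<theta>' x)\<^sup>2)"
  using assms set_integrable_GPD_surv
  by (intro set_integrable_square_diff) (auto simp: GPD_surv_le_1 less_imp_le[OF GPD_surv_pos])

lemma GPD_sqdist_le_J_crit:
  assumes "\<theta> \<in> {0<..<1} \<times> {0<..}" "\<theta>' \<in> {0<..<1} \<times> {0<..}"
  shows "GPD_sqdist \<theta> \<theta>' \<le> 2 * J_crit Z k \<omega> \<theta> + 2 * J_crit Z k \<omega> \<theta>'"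
  unfolding GPD_sqdist_def J_crit_def
  using assms set_integrable_emp_surv_GPD_surv set_integrable_GPD_surv_diff
  by (intro set_integral_square_diff_le)

lemma GPD_sqdist_eq_0_imp_eq:
  assumes \<theta>: "\<theta> \<in> {0<..<1} \<times> {0<..}" and \<theta>': "\<theta>' \<in> {0<..<1} \<times> {0<..}"
    and "GPD_sqdist \<theta> \<theta>' = 0"
  shows "\<theta> = \<theta>'"
proof (rule GPD_surv_inject)
  define u where "u x = GPD_surv \<theta> x - GPD_surv \<theta>' x" for x
  have "AE x in lborel. indicator {0..} x *\<^sub>R (u x)\<^sup>2 = 0"
    using assms set_integrable_GPD_surv_diff[OF \<theta> \<theta>']
    unfolding GPD_sqdist_def set_lebesgue_integral_def set_integrable_def u_def
    by (subst integral_nonneg_eq_0_iff_AE[symmetric]) auto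
  then have ae: "AE x in lebesgue. x \<in> {0<..} \<longrightarrow> x \<in> {0..} \<inter> u -` {0}"
    by (intro AE_completion) (auto elim!: eventually_mono simp: indicator_def)
  have closed: "closed ({0..} \<inter> u -` {0})"
    unfolding u_def using \<theta> \<theta>'
    by (intro continuous_closed_preimage continuous_on_diff continuous_on_GPD_surv) auto
  have "x \<in> {0..} \<inter> u -` {0}" if "0 < x" for x
    using mem_closed_if_AE_lebesgue_open[OF open_greaterThan closed ae] that by simp
  then show "GPD_surv \<theta> x = GPD_surv \<theta>' x" if "0 < x" for x
    using that by (simp add: u_def)
qed (use \<theta> \<theta>' in auto)

lemma GPD_sqdist_tendsto_0_imp_eq:
  assumes t: "t \<longlonglongrightarrow> \<theta>" "\<And>n. t n \<in> {0<..<1} \<times> {0<..}"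
    and \<theta>: "\<theta> \<in> {0<..<1} \<times> {0<..}" and \<theta>0: "\<theta>0 \<in> {0<..<1} \<times> {0<..}"
    and lim: "(\<lambda>n. GPD_sqdist (t n) \<theta>0) \<longlonglongrightarrow> 0"
  shows "\<theta> = \<theta>0"
proof -
  have nn: "ennreal (GPD_sqdist \<theta>' \<theta>0) = (\<integral>\<^sup>+x\<in>{0..}. (GPD_surv \<theta>' x - GPD_surv \<theta>0 x)\<^sup>2 \<partial>lborel)"
    if "\<theta>' \<in> {0<..<1} \<times> {0<..}" for \<theta>'
    unfolding GPD_sqdist_def
    by (intro set_integral_nonneg_eq_nn_integral set_integrable_GPD_surv_diff that \<theta>0) simp
  have pointwise: "(\<lambda>n. ennreal ((GPD_surv (t n) x - GPD_surv \<theta>0 x)\<^sup>2) * indicator {0..} x)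
      \<longlonglongrightarrow> ennreal ((GPD_surv \<theta> x - GPD_surv \<theta>0 x)\<^sup>2) * indicator {0..} x" for x
    using \<theta> by (cases "0 \<le> x")
      (auto intro!: tendsto_intros isCont_tendsto_compose[OF isCont_GPD_surv_param t(1)] simp: mem_Times_iff)
  have "ennreal (GPD_sqdist \<theta> \<theta>0)
      = (\<integral>\<^sup>+x. liminf (\<lambda>n. ennreal ((GPD_surv (t n) x - GPD_surv \<theta>0 x)\<^sup>2) * indicator {0..} x) \<partial>lborel)"
    unfolding nn[OF \<theta>] lim_imp_Liminf[OF trivial_limit_sequentially pointwise] ..
  also have "\<dots> \<le> liminf (\<lambda>n. \<integral>\<^sup>+x\<in>{0..}. (GPD_surv (t n) x - GPD_surv \<theta>0 x)\<^sup>2 \<partial>lborel)"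
    by (rule nn_integral_liminf) simp
  also have "\<dots> = liminf (\<lambda>n. ennreal (GPD_sqdist (t n) \<theta>0))"
    using nn[OF t(2)] by simp
  also have "\<dots> = 0"
    using lim by (intro lim_imp_Liminf) (auto intro: tendsto_ennrealI[of _ 0, simplified])
  finally have "GPD_sqdist \<theta> \<theta>0 = 0"
    using GPD_sqdist_nonneg by (simp add: ennreal_le_iff)
  then show ?thesis
    by (rule GPD_sqdist_eq_0_imp_eq[OF \<theta> \<theta>0])
qed

lemma GPD_sqdist_separated:
  assumes \<Theta>: "compact \<Theta>" "\<Theta> \<subseteq> {0<..<1} \<times> {0<..}" and \<theta>0: "\<theta>0 \<in> \<Theta>" and \<epsilon>: "0 < \<epsilon>"
  shows "\<exists>\<eta>>0. \<forall>\<theta>\<in>\<Theta>. \<epsilon> < dist \<theta> \<theta>0 \<longrightarrow> \<eta> \<le> GPD_sqdist \<theta> \<theta>0"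
proof (rule ccontr)
  assume "\<not> ?thesis"
  then have "\<forall>n. \<exists>\<theta>\<in>\<Theta>. \<epsilon> < dist \<theta> \<theta>0 \<and> GPD_sqdist \<theta> \<theta>0 < inverse (Suc n)"
    by (force simp: not_le)
  then obtain T where T: "\<And>n. T n \<in> \<Theta>" "\<And>n. \<epsilon> < dist (T n) \<theta>0"
    "\<And>n. GPD_sqdist (T n) \<theta>0 < inverse (Suc n)"
    by metis
  obtain \<theta> r where \<theta>: "\<theta> \<in> \<Theta>" and r: "strict_mono r" and lim: "(T \<circ> r) \<longlonglongrightarrow> \<theta>"
    using \<Theta>(1) T(1) unfolding compact_def by metis
  have "(\<lambda>n. GPD_sqdist ((T \<circ> r) n) \<theta>0) \<longlonglongrightarrow> 0"
  proof (rule tendsto_sandwich[of "\<lambda>_. 0" _ _ "\<lambda>n. inverse (Suc n)"])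
    have "GPD_sqdist ((T \<circ> r) n) \<theta>0 \<le> inverse (Suc n)" for n
    proof -
      have "GPD_sqdist ((T \<circ> r) n) \<theta>0 \<le> inverse (Suc (r n))"
        using T(3)[of "r n"] by simp
      also have "\<dots> \<le> inverse (Suc n)"
        using seq_suble[OF r, of n] by (intro le_imp_inverse_le) auto
      finally show ?thesis .
    qed
    then show "\<forall>\<^sub>F n in sequentially. GPD_sqdist ((T \<circ> r) n) \<theta>0 \<le> inverse (Suc n)"
      by simp
  qed (use LIMSEQ_inverse_real_of_nat in \<open>auto simp: GPD_sqdist_nonneg\<close>)
  then have "\<theta> = \<theta>0"
    using \<Theta>(2) T(1) \<theta> \<theta>0 by (intro GPD_sqdist_tendsto_0_imp_eq[OF lim]) auto
  moreover have "\<epsilon> \<le> dist \<theta> \<theta>0"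
    using T(2) by (intro LIMSEQ_le_const[OF tendsto_dist[OF lim tendsto_const]]) (auto intro: less_imp_le)
  ultimately show False
    using \<epsilon> by simp
qed

section \<open>Consistency of near-minimizers of the criterion\<close>

lemma near_minimizer_conv_in_prob:
  assumes M: "prob_space M" and \<Theta>: "compact \<Theta>" "\<Theta> \<subseteq> {0<..<1} \<times> {0<..}" and \<theta>0: "\<theta>0 \<in> \<Theta>"
    and indep: "prob_space.indep_vars M (\<lambda>_. borel) Z {1..}"
    and cdf: "\<And>j x. 1 \<le> j \<Longrightarrow> measure M {\<omega> \<in> space M. Z j \<omega> \<le> x} = GPD_cdf \<theta>0 x"
    and \<theta>hat: "\<And>k \<omega>. \<omega> \<in> space M \<Longrightarrow> \<theta>hat k \<omega> \<in> \<Theta>"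
    and R: "\<And>k. R k \<in> borel_measurable M" "conv_in_prob M R 0"
    and near_min: "\<And>k \<omega>. \<omega> \<in> space M \<Longrightarrow> J_crit Z k \<omega> (\<theta>hat k \<omega>) \<le> J_crit Z k \<omega> \<theta>0 + R k \<omega>"
  shows "conv_in_prob M \<theta>hat \<theta>0"
proof (rule conv_in_prob_dominated[OF M])
  have \<theta>0_params: "\<theta>0 \<in> {0<..<1} \<times> {0<..}"
    using \<theta>0 \<Theta>(2) by blast
  have J_meas: "(\<lambda>\<omega>. J_crit Z k \<omega> \<theta>0) \<in> borel_measurable M" for k
    using indep M by (intro borel_measurable_J_crit) (auto simp: prob_space.indep_vars_def2)
  then show "(\<lambda>\<omega>. 4 * J_crit Z k \<omega> \<theta>0 + 2 * R k \<omega>) \<in> borel_measurable M" for k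
    using R(1)[of k] by measurable
  show "conv_in_prob M (\<lambda>k \<omega>. 4 * J_crit Z k \<omega> \<theta>0 + 2 * R k \<omega>) 0"
    using J_meas R J_crit_conv_in_prob[OF M indep cdf \<theta>0_params]
    by (intro conv_in_prob_zero_add[OF M] conv_in_prob_zero_cmult) auto
  fix \<epsilon> :: real assume "0 < \<epsilon>"
  then obtain \<eta> where "0 < \<eta>" and \<eta>: "\<And>\<theta>. \<theta> \<in> \<Theta> \<Longrightarrow> \<epsilon> < dist \<theta> \<theta>0 \<Longrightarrow> \<eta> \<le> GPD_sqdist \<theta> \<theta>0"
    using GPD_sqdist_separated[OF \<Theta> \<theta>0] by blast
  have "\<eta> \<le> 4 * J_crit Z k \<omega> \<theta>0 + 2 * R k \<omega>" if "\<omega> \<in> space M" "\<epsilon> < dist (\<theta>hat k \<omega>) \<theta>0" for k \<omega>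
  proof -
    have "\<eta> \<le> GPD_sqdist (\<theta>hat k \<omega>) \<theta>0"
      using \<eta> \<theta>hat that by blast
    also have "\<dots> \<le> 2 * J_crit Z k \<omega> (\<theta>hat k \<omega>) + 2 * J_crit Z k \<omega> \<theta>0"
      using \<theta>hat[OF that(1)] \<Theta>(2) \<theta>0_params by (intro GPD_sqdist_le_J_crit) auto
    also have "\<dots> \<le> 4 * J_crit Z k \<omega> \<theta>0 + 2 * R k \<omega>"
      using near_min[OF that(1), of k] by simp
    finally show ?thesis .
  qed
  then show "\<exists>\<eta>>0. \<forall>k. \<forall>\<omega>\<in>space M. \<epsilon> < dist (\<theta>hat k \<omega>) \<theta>0 \<longrightarrow> \<eta> \<le> 4 * J_crit Z k \<omega> \<theta>0 + 2 * R k \<omega>"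
    using \<open>0 < \<eta>\<close> by blast
qed

theorem theorem1:
  fixes M :: "'a measure"
    and \<Theta> :: "(real \<times> real) set"
    and \<theta>0 :: "real \<times> real"
    and Z :: "nat \<Rightarrow> 'a \<Rightarrow> real"
    and est :: "nat \<Rightarrow> real list \<Rightarrow> real \<times> real"
    and \<theta>hat :: "nat \<Rightarrow> 'a \<Rightarrow> real \<times> real"
  assumes M: "prob_space M"
    and \<Theta>_compact: "compact \<Theta>"
    and \<Theta>_convex: "convex \<Theta>"
    and \<Theta>_sub: "\<Theta> \<subseteq> {0<..<1} \<times> {0<..}"
    and \<theta>0_int: "\<theta>0 \<in> interior \<Theta>"
    and indep: "prob_space.indep_vars M (\<lambda>_. borel) Z {1..}"
    and distr: "\<And>j x. j \<ge> 1 \<Longrightarrow> measure M {\<omega> \<in> space M. Z j \<omega> \<le> x} = GPD_cdf \<theta>0 x"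
    and est_def: "\<And>k \<omega>. \<omega> \<in> space M \<Longrightarrow> \<theta>hat k \<omega> = est k (map (\<lambda>j. Z j \<omega>) [1..<k+1])"
    and est_meas: "\<And>k. \<theta>hat k \<in> borel_measurable M"
    and est_in: "\<And>k \<omega>. \<omega> \<in> space M \<Longrightarrow> \<theta>hat k \<omega> \<in> \<Theta>"
    and near_min: "\<exists>R :: nat \<Rightarrow> 'a \<Rightarrow> real.
        (\<forall>k. R k \<in> borel_measurable M) \<and> conv_in_prob M R 0 \<and>
        (\<forall>k. \<forall>\<omega>\<in>space M. J_crit Z k \<omega> (\<theta>hat k \<omega>) \<le> J_crit Z k \<omega> \<theta>0 + R k \<omega>)"
  shows "conv_in_prob M \<theta>hat \<theta>0 \<and>
         (\<forall>x\<ge>0. conv_in_prob M (\<lambda>k \<omega>. GPD_surv (\<theta>hat k \<omega>) x) (GPD_surv \<theta>0 x))"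
proof -
  have \<theta>0: "\<theta>0 \<in> \<Theta>"
    using \<theta>0_int interior_subset by blast
  obtain R where R_meas: "\<And>k. R k \<in> borel_measurable M" and R: "conv_in_prob M R 0"
    and J_le: "\<And>k \<omega>. \<omega> \<in> space M \<Longrightarrow> J_crit Z k \<omega> (\<theta>hat k \<omega>) \<le> J_crit Z k \<omega> \<theta>0 + R k \<omega>"
    using near_min by blast
  have consistent: "conv_in_prob M \<theta>hat \<theta>0"
    using M \<Theta>_compact \<Theta>_sub \<theta>0 indep distr est_in R_meas R J_le by (rule near_minimizer_conv_in_prob)
  have "conv_in_prob M (\<lambda>k \<omega>. GPD_surv (\<theta>hat k \<omega>) x) (GPD_surv \<theta>0 x)" if "0 \<le> x" for x
    using \<theta>0 \<Theta>_sub that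
    by (intro conv_in_prob_continuous_map[OF M est_meas consistent] isCont_GPD_surv_param) auto
  with consistent show ?thesis
    by blast
qed

end
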